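(* Let $n\geq4$ with $n\not\equiv 0 \pmod 3$, let $R=K[x_1,\ldots,x_n]$ with $\mathfrak m=(x_1,\ldots,x_n)$, and let $I_n=NI(C_n)=(x_{i-1}x_ix_{i+1}: i=1,\ldots,n)$ (indices modulo $n$) be the closed neighborhood ideal of the $n$-cycle. Then $\mathrm{depth}(R/I_n^{\,n-1})=0$. In particular, $\mathfrak m\in\mathrm{Ass}(R/I_n^{\,n-1})$ and $\lim_{k\to\infty}\mathrm{depth}(R/I_n^k)=0$.
   Context: $C_n$ is the cycle with vertices $1,\ldots,n$ and edges $\{i,i+1\}$ ($1\le i\le n-1$) and $\{n,1\}$. For a simple graph $G$, $N_G[i]=\{j:\{i,j\}\in E(G)\}\cup\{i\}$ and $NI(G)=(\prod_{j\in N_G[i]}x_j : i\in V(G))$. *)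

theory Defs
  imports "HOL-Library.Poly_Mapping" "HOL-Library.Extended_Real"
begin

text \<open>Polynomials over K in variables indexed by naturals: (nat =>0 nat) =>0 K.
 The ring R = K[x_1,...,x_n] is the subring of polynomials involving only x_1..x_n.\<close>

type_synonym 'a mpoly = "(nat \<Rightarrow>\<^sub>0 nat) \<Rightarrow>\<^sub>0 'a"

definition var :: "nat \<Rightarrow> 'a::comm_ring_1 mpoly" where
  "var i = Poly_Mapping.single (Poly_Mapping.single i 1) 1"

definition polyring :: "nat \<Rightarrow> 'a::comm_ring_1 mpoly set" where
  "polyring n = {p::'a mpoly. \<forall>m\<in>Poly_Mapping.keys p. Poly_Mapping.keys m \<subseteq> {1..n}}"

definition ideal_gen :: "nat \<Rightarrow> 'a::comm_ring_1 mpoly set \<Rightarrow> 'a mpoly set" where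
  "ideal_gen n G = {(\<Sum>g\<in>F. r g * g) | F r. finite F \<and> F \<subseteq> G \<and> (\<forall>g\<in>F. r g \<in> polyring n)}"

definition ideal_pow :: "nat \<Rightarrow> 'a::comm_ring_1 mpoly set \<Rightarrow> nat \<Rightarrow> 'a mpoly set" where
  "ideal_pow n I k = ideal_gen n {(\<Prod>i<k. f i) | f. \<forall>i<k. f i \<in> I}"

definition max_ideal :: "nat \<Rightarrow> 'a::comm_ring_1 mpoly set" where
  "max_ideal n = ideal_gen n (var ` {1..n})"

definition cycle_edge :: "nat \<Rightarrow> nat \<Rightarrow> nat \<Rightarrow> bool" where
  "cycle_edge n i j \<longleftrightarrow> i \<in> {1..n} \<and> j \<in> {1..n} \<and>
     ((j = i + 1 \<and> i \<le> n - 1) \<or> (i = j + 1 \<and> j \<le> n - 1) \<or>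
      (i = n \<and> j = 1) \<or> (i = 1 \<and> j = n))"

definition closed_nbhd :: "nat \<Rightarrow> nat \<Rightarrow> nat set" where
  "closed_nbhd n i = {j. cycle_edge n i j} \<union> {i}"

definition NI_cycle :: "nat \<Rightarrow> 'a::comm_ring_1 mpoly set" where
  "NI_cycle n = ideal_gen n ((\<lambda>i. \<Prod>j\<in>closed_nbhd n i. var j) ` {1..n})"

definition nonzerodiv_mod :: "nat \<Rightarrow> 'a::comm_ring_1 mpoly set \<Rightarrow> 'a mpoly \<Rightarrow> bool" where
  "nonzerodiv_mod n J f \<longleftrightarrow> (\<forall>g\<in>polyring n. f * g \<in> J \<longrightarrow> g \<in> J)"

definition regular_seq :: "nat \<Rightarrow> 'a::comm_ring_1 mpoly set \<Rightarrow> 'a mpoly list \<Rightarrow> bool" where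
  "regular_seq n J fs \<longleftrightarrow> set fs \<subseteq> max_ideal n \<and>
     (\<forall>i<length fs. nonzerodiv_mod n (ideal_gen n (J \<union> set (take i fs))) (fs ! i)) \<and>
     1 \<notin> ideal_gen n (J \<union> set fs)"

definition depth :: "nat \<Rightarrow> 'a::comm_ring_1 mpoly set \<Rightarrow> enat" where
  "depth n J = Sup {enat (length fs) | fs. regular_seq n J fs}"

definition prime_ideal :: "nat \<Rightarrow> 'a::comm_ring_1 mpoly set \<Rightarrow> bool" where
  "prime_ideal n P \<longleftrightarrow> ideal_gen n P = P \<and> P \<noteq> polyring n \<and>
     (\<forall>a\<in>polyring n. \<forall>b\<in>polyring n. a * b \<in> P \<longrightarrow> a \<in> P \<or> b \<in> P)"

definition Ass :: "nat \<Rightarrow> 'a::comm_ring_1 mpoly set \<Rightarrow> 'a mpoly set set" where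
  "Ass n J = {P. prime_ideal n P \<and> (\<exists>g\<in>polyring n. P = {f\<in>polyring n. f * g \<in> J})}"

end

theory Submission
  imports Defs "HOL-Number_Theory.Cong"
begin

text \<open>
  Index the variables cyclically by residues modulo \<open>n\<close> and put \<open>u\<^sub>r = x\<^sub>r\<^sub>-\<^sub>1 x\<^sub>r x\<^sub>r\<^sub>+\<^sub>1\<close>,
  so that \<open>I = (u\<^sub>0, \<dots>, u\<^sub>n\<^sub>-\<^sub>1)\<close>. The monomial
  \<open>g = x\<^sub>0\<^sup>2 x\<^sub>1\<^sup>2 x\<^sub>2\<^sup>2 x\<^sub>3\<^sup>2 \<Prod>\<^sub>r\<^sub>\<ge>\<^sub>4 x\<^sub>r\<^sup>3\<close> has degree \<open>3(n - 1) - 1\<close>, so it lies outside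
  \<open>I\<^sup>n\<^sup>-\<^sup>1\<close>, all of whose monomials have degree at least \<open>3(n - 1)\<close>. On the other hand
  \<open>x\<^sub>3 g u\<^sub>1 = \<Prod>\<^sub>r u\<^sub>r\<close>, and the exchange relation \<open>u\<^sub>j\<^sub>+\<^sub>1 x\<^sub>j\<^sub>+\<^sub>3 = u\<^sub>j\<^sub>+\<^sub>2 x\<^sub>j\<close> moves the
  extra variable three places at a time:
  \<open>x\<^sub>3\<^sub>+\<^sub>3\<^sub>t g u\<^sub>1 u\<^sub>4 \<cdots> u\<^sub>1\<^sub>+\<^sub>3\<^sub>t = (\<Prod>\<^sub>r u\<^sub>r) u\<^sub>5 u\<^sub>8 \<cdots> u\<^sub>2\<^sub>+\<^sub>3\<^sub>t\<close>.
  Since 3 is invertible modulo \<open>n\<close>, the indices \<open>1, 4, \<dots>, 1 + 3t\<close> are distinct for \<open>t < n\<close>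
  and \<open>3 + 3t\<close> runs through all residues, so cancelling gives \<open>x\<^sub>r g \<in> I\<^sup>n\<^sup>-\<^sup>1\<close> for every \<open>r\<close>.
  Hence \<open>I\<^sup>n\<^sup>-\<^sup>1 : g\<close> is the maximal ideal, which gives depth 0 and membership in \<open>Ass\<close>;
  multiplying \<open>g\<close> by powers of \<open>u\<^sub>0\<close> does the same for every \<open>I\<^sup>k\<close> with \<open>k \<ge> n - 1\<close>.
\<close>

lemma polyring_var: "i \<in> {1..n} \<Longrightarrow> (var i :: 'a::comm_ring_1 mpoly) \<in> polyring n"
  by (simp add: var_def polyring_def)

lemma polyring_0: "(0 :: 'a::comm_ring_1 mpoly) \<in> polyring n"
  by (simp add: polyring_def)

lemma polyring_1: "(1 :: 'a::comm_ring_1 mpoly) \<in> polyring n"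
  by (simp add: polyring_def)

lemma polyring_add: "p \<in> polyring n \<Longrightarrow> q \<in> polyring n \<Longrightarrow> p + q \<in> polyring n"
  unfolding polyring_def using keys_add[of p q] by blast

lemma keys_add_monomial: "Poly_Mapping.keys (m + m' :: nat \<Rightarrow>\<^sub>0 nat) = Poly_Mapping.keys m \<union> Poly_Mapping.keys m'"
  by (auto simp: in_keys_iff lookup_add)

lemma polyring_mult: "p \<in> polyring n \<Longrightarrow> q \<in> polyring n \<Longrightarrow> p * q \<in> polyring n"
  unfolding polyring_def using keys_mult[of p q] by (fastforce simp: keys_add_monomial)

lemma polyring_sum: "(\<And>x. x \<in> S \<Longrightarrow> f x \<in> polyring n) \<Longrightarrow> sum f S \<in> polyring n"
  by (induction S rule: infinite_finite_induct) (auto simp: polyring_0 polyring_add)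

lemma polyring_prod: "(\<And>x. x \<in> S \<Longrightarrow> f x \<in> polyring n) \<Longrightarrow> prod f S \<in> polyring n"
  by (induction S rule: infinite_finite_induct) (auto simp: polyring_1 polyring_mult)

lemma polyring_power: "p \<in> polyring n \<Longrightarrow> p ^ k \<in> polyring n"
  by (induction k) (auto simp: polyring_1 polyring_mult)

lemma ideal_gen_0: "0 \<in> ideal_gen n G"
  unfolding ideal_gen_def by (rule CollectI, rule exI[of _ "{}"]) auto

lemma ideal_gen_scaled_generator: "g \<in> G \<Longrightarrow> r \<in> polyring n \<Longrightarrow> r * g \<in> ideal_gen n G"
  unfolding ideal_gen_def by (rule CollectI, rule exI[of _ "{g}"], rule exI[of _ "\<lambda>_. r"]) auto

lemma ideal_gen_generator: "g \<in> G \<Longrightarrow> g \<in> ideal_gen n G"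
  using ideal_gen_scaled_generator[OF _ polyring_1] by fastforce

lemma ideal_gen_add:
  assumes "p \<in> ideal_gen n G" "q \<in> ideal_gen n G"
  shows "p + q \<in> ideal_gen n G"
proof -
  obtain F1 r1 where F1: "p = (\<Sum>g\<in>F1. r1 g * g)" "finite F1" "F1 \<subseteq> G" "\<forall>g\<in>F1. r1 g \<in> polyring n"
    using assms(1) unfolding ideal_gen_def by blast
  obtain F2 r2 where F2: "q = (\<Sum>g\<in>F2. r2 g * g)" "finite F2" "F2 \<subseteq> G" "\<forall>g\<in>F2. r2 g \<in> polyring n"
    using assms(2) unfolding ideal_gen_def by blast
  define r where "r g = (if g \<in> F1 then r1 g else 0) + (if g \<in> F2 then r2 g else 0)" for g
  have "p = (\<Sum>g\<in>F1 \<union> F2. (if g \<in> F1 then r1 g else 0) * g)"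
    unfolding F1 by (rule sum.mono_neutral_cong_left) (use F1 F2 in auto)
  moreover have "q = (\<Sum>g\<in>F1 \<union> F2. (if g \<in> F2 then r2 g else 0) * g)"
    unfolding F2 by (rule sum.mono_neutral_cong_left) (use F1 F2 in auto)
  ultimately have "p + q = (\<Sum>g\<in>F1 \<union> F2. r g * g)"
    by (simp add: r_def distrib_right sum.distrib)
  moreover have "\<forall>g\<in>F1 \<union> F2. r g \<in> polyring n"
    using F1 F2 by (auto simp: r_def polyring_add polyring_0)
  ultimately show ?thesis
    using F1 F2 unfolding ideal_gen_def by (intro CollectI exI[of _ "F1 \<union> F2"] exI[of _ r]) simp
qed

lemma ideal_gen_sum: "(\<And>x. x \<in> S \<Longrightarrow> f x \<in> ideal_gen n G) \<Longrightarrow> sum f S \<in> ideal_gen n G"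
  by (induction S rule: infinite_finite_induct) (auto simp: ideal_gen_0 ideal_gen_add)

lemma ideal_gen_mult:
  assumes "p \<in> ideal_gen n G" "r \<in> polyring n"
  shows "r * p \<in> ideal_gen n G"
proof -
  obtain F s where F: "p = (\<Sum>g\<in>F. s g * g)" "finite F" "F \<subseteq> G" "\<forall>g\<in>F. s g \<in> polyring n"
    using assms(1) unfolding ideal_gen_def by blast
  have "r * p = (\<Sum>g\<in>F. (r * s g) * g)"
    using F by (simp add: sum_distrib_left mult.assoc)
  moreover have "\<forall>g\<in>F. r * s g \<in> polyring n"
    using F assms(2) by (auto simp: polyring_mult)
  ultimately show ?thesis
    using F unfolding ideal_gen_def by (intro CollectI exI[of _ F] exI[of _ "\<lambda>g. r * s g"]) simp
qed

lemma ideal_gen_subset_polyring: "G \<subseteq> polyring n \<Longrightarrow> ideal_gen n G \<subseteq> polyring n"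
  unfolding ideal_gen_def by (auto intro!: polyring_sum polyring_mult)

lemma ideal_gen_mult_right:
  assumes "f \<in> ideal_gen n G" "\<And>x. x \<in> G \<Longrightarrow> x * g \<in> ideal_gen n H"
  shows "f * g \<in> ideal_gen n H"
proof -
  obtain F r where F: "f = (\<Sum>x\<in>F. r x * x)" "F \<subseteq> G" "\<forall>x\<in>F. r x \<in> polyring n"
    using assms(1) unfolding ideal_gen_def by blast
  have "f * g = (\<Sum>x\<in>F. r x * (x * g))"
    unfolding F(1) by (simp add: sum_distrib_right mult.assoc)
  also have "\<dots> \<in> ideal_gen n H"
    using F by (intro ideal_gen_sum ideal_gen_mult assms(2)) auto
  finally show ?thesis .
qed

lemma ideal_gen_idem: "ideal_gen n (ideal_gen n G) = ideal_gen n G"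
  using ideal_gen_mult_right[where g = 1] ideal_gen_generator by fastforce

definition total_degree :: "(nat \<Rightarrow>\<^sub>0 nat) \<Rightarrow> nat" where
  "total_degree m = (\<Sum>k\<in>Poly_Mapping.keys m. Poly_Mapping.lookup m k)"

lemma total_degree_add: "total_degree (a + b) = total_degree a + total_degree b"
  unfolding total_degree_def by (rule setsum_keys_plus_distrib) auto

lemma total_degree_single: "total_degree (Poly_Mapping.single i k) = k"
  by (simp add: total_degree_def)

definition low_degree_ge :: "nat \<Rightarrow> 'a::comm_ring_1 mpoly \<Rightarrow> bool" where
  "low_degree_ge d p \<longleftrightarrow> (\<forall>m\<in>Poly_Mapping.keys p. d \<le> total_degree m)"

lemma low_degree_ge_0 [simp]: "low_degree_ge d 0"
  by (simp add: low_degree_ge_def)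

lemma low_degree_ge_add: "low_degree_ge d p \<Longrightarrow> low_degree_ge d q \<Longrightarrow> low_degree_ge d (p + q)"
  unfolding low_degree_ge_def using keys_add[of p q] by blast

lemma low_degree_ge_sum: "(\<And>x. x \<in> S \<Longrightarrow> low_degree_ge d (f x)) \<Longrightarrow> low_degree_ge d (sum f S)"
  by (induction S rule: infinite_finite_induct) (auto simp: low_degree_ge_add)

lemma low_degree_ge_mult: "low_degree_ge a p \<Longrightarrow> low_degree_ge b q \<Longrightarrow> low_degree_ge (a + b) (p * q)"
  unfolding low_degree_ge_def using keys_mult[of p q] by (fastforce simp: total_degree_add)

lemma low_degree_ge_ideal_gen:
  assumes "\<And>g. g \<in> G \<Longrightarrow> low_degree_ge d g" "p \<in> ideal_gen n G"
  shows "low_degree_ge d p"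
proof -
  have "low_degree_ge (0 + d) (r * g)" if "g \<in> G" for r g
    using that assms(1) by (intro low_degree_ge_mult) (auto simp: low_degree_ge_def)
  then show ?thesis
    using assms(2) unfolding ideal_gen_def by (auto intro!: low_degree_ge_sum)
qed

lemma low_degree_ge_prod:
  "finite S \<Longrightarrow> (\<And>x. x \<in> S \<Longrightarrow> low_degree_ge d (f x)) \<Longrightarrow> low_degree_ge (d * card S) (prod f S)"
proof (induction S rule: finite_induct)
  case empty
  show ?case by (simp add: low_degree_ge_def)
next
  case (insert x S)
  then show ?case by (simp add: low_degree_ge_mult)
qed

definition monomial_of_degree :: "nat \<Rightarrow> 'a::comm_ring_1 mpoly \<Rightarrow> bool" where
  "monomial_of_degree d p \<longleftrightarrow> (\<exists>m. p = Poly_Mapping.single m 1 \<and> total_degree m = d)"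

lemma monomial_of_degree_var: "monomial_of_degree 1 (var i)"
  by (auto simp: monomial_of_degree_def var_def total_degree_single)

lemma monomial_of_degree_mult:
  "monomial_of_degree a p \<Longrightarrow> monomial_of_degree b q \<Longrightarrow> monomial_of_degree (a + b) (p * q)"
  by (auto simp: monomial_of_degree_def mult_single total_degree_add)

lemma monomial_of_degree_prod:
  "finite S \<Longrightarrow> (\<And>x. x \<in> S \<Longrightarrow> monomial_of_degree (d x) (f x))
    \<Longrightarrow> monomial_of_degree (\<Sum>x\<in>S. d x) (\<Prod>x\<in>S. f x)"
proof (induction S rule: finite_induct)
  case empty
  show ?case by (auto simp: monomial_of_degree_def total_degree_def intro: exI[of _ 0])
next
  case (insert x S)
  then show ?case by (simp add: monomial_of_degree_mult)
qed

lemma monomial_of_degree_power: "monomial_of_degree d p \<Longrightarrow> monomial_of_degree (d * k) (p ^ k)"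
  using monomial_of_degree_prod[of "{..<k}" "\<lambda>_. d" "\<lambda>_. p"] by (simp add: mult.commute)

lemma monomial_of_degree_nonzero: "monomial_of_degree d p \<Longrightarrow> p \<noteq> 0"
  unfolding monomial_of_degree_def by (metis lookup_single_eq lookup_zero one_neq_zero)

lemma low_degree_ge_monomial: "monomial_of_degree d p \<Longrightarrow> low_degree_ge d p"
  by (auto simp: monomial_of_degree_def low_degree_ge_def)

definition prods :: "nat \<Rightarrow> 'a::comm_monoid_mult set \<Rightarrow> 'a set" where
  "prods k I = {(\<Prod>i<k. f i) | f. \<forall>i<k. f i \<in> I}"

lemma ideal_pow_eq_ideal_gen_prods: "ideal_pow n I k = ideal_gen n (prods k I)"
  by (simp add: ideal_pow_def prods_def)

lemma power_in_prods: "x \<in> I \<Longrightarrow> x ^ m \<in> prods m I"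
  unfolding prods_def by (rule CollectI, rule exI[of _ "\<lambda>_. x"]) simp

lemma prods_mult:
  assumes "p \<in> prods a I" "q \<in> prods b I"
  shows "p * q \<in> prods (a + b) I"
proof -
  obtain f g where f: "p = (\<Prod>i<a. f i)" "\<forall>i<a. f i \<in> I" and g: "q = (\<Prod>i<b. g i)" "\<forall>i<b. g i \<in> I"
    using assms unfolding prods_def by blast
  define h where "h i = (if i < a then f i else g (i - a))" for i
  have "(\<Prod>i<a + b. h i) = (\<Prod>i<a. h i) * (\<Prod>i\<in>{0 + a..<b + a}. h i)"
    using prod.atLeastLessThan_concat[of 0 a "a + b" h] by (simp add: atLeast0LessThan add.commute)
  also have "\<dots> = p * q"
    unfolding prod.shift_bounds_nat_ivl by (simp add: f g h_def atLeast0LessThan)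
  finally have "p * q = (\<Prod>i<a + b. h i)" ..
  moreover have "\<forall>i<a + b. h i \<in> I"
    using f g by (auto simp: h_def)
  ultimately show ?thesis
    unfolding prods_def by blast
qed

lemma prod_in_prods:
  assumes "finite S" "\<And>x. x \<in> S \<Longrightarrow> h x \<in> I"
  shows "prod h S \<in> prods (card S) I"
proof -
  obtain e where e: "bij_betw e {..<card S} S"
    using ex_bij_betw_nat_finite[OF assms(1)] by (auto simp: atLeast0LessThan)
  then have "prod h S = (\<Prod>i<card S. h (e i))"
    by (simp add: prod.reindex_bij_betw)
  moreover have "\<forall>i<card S. h (e i) \<in> I"
    using e assms(2) by (auto simp: bij_betw_def)
  ultimately show ?thesis
    unfolding prods_def by blast
qed

lemma low_degree_ge_ideal_pow:
  assumes "\<And>p. p \<in> I \<Longrightarrow> low_degree_ge d p" "p \<in> ideal_pow n I k"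
  shows "low_degree_ge (d * k) p"
proof -
  have "low_degree_ge (d * k) q" if "q \<in> prods k I" for q
    using that assms(1) low_degree_ge_prod[of "{..<k}" d] unfolding prods_def by auto
  then show ?thesis
    using assms(2) unfolding ideal_pow_eq_ideal_gen_prods by (rule low_degree_ge_ideal_gen)
qed

lemma monomial_add_eq_0_iff: "(k + m :: nat \<Rightarrow>\<^sub>0 nat) = 0 \<longleftrightarrow> k = 0 \<and> m = 0"
  by (simp add: poly_mapping_eq_iff fun_eq_iff lookup_add) blast

lemma lookup_mult_0:
  "Poly_Mapping.lookup (f * g :: 'a::comm_ring_1 mpoly) 0 = Poly_Mapping.lookup f 0 * Poly_Mapping.lookup g 0"
proof -
  have "(\<Sum>q. Poly_Mapping.lookup g q when 0 = l + q) = (Poly_Mapping.lookup g 0 when l = 0)" for l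
  proof -
    have "(\<Sum>q. Poly_Mapping.lookup g q when 0 = l + q)
        = (\<Sum>q::nat \<Rightarrow>\<^sub>0 nat. (Poly_Mapping.lookup g 0 when l = 0) when q = 0)"
      by (rule arg_cong[where f = Sum_any]) (auto simp: when_def fun_eq_iff monomial_add_eq_0_iff)
    then show ?thesis by simp
  qed
  then show ?thesis
    unfolding lookup_mult by (simp add: mult_when)
qed

lemma lookup_mult_single_add:
  "Poly_Mapping.lookup (f * Poly_Mapping.single m c :: 'a::comm_ring_1 mpoly) (k + m)
    = Poly_Mapping.lookup f k * c"
proof -
  have "(\<Sum>q. Poly_Mapping.lookup (Poly_Mapping.single m c) q when k + m = l + q) = (c when l = k)" for l
  proof -
    have "(\<Sum>q. Poly_Mapping.lookup (Poly_Mapping.single m c) q when k + m = l + q)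
        = (\<Sum>q. (c when l = k) when q = m)"
      by (rule arg_cong[where f = Sum_any]) (auto simp: when_def fun_eq_iff lookup_single)
    then show ?thesis by simp
  qed
  then show ?thesis
    unfolding lookup_mult by (simp add: mult_when)
qed

lemma lookup_var_0: "Poly_Mapping.lookup (var i :: 'a::comm_ring_1 mpoly) 0 = 0"
proof -
  have "Poly_Mapping.single i (1::nat) \<noteq> 0"
    by (metis lookup_single_eq lookup_zero one_neq_zero)
  then show ?thesis
    by (simp add: var_def lookup_single_not_eq)
qed

lemma poly_mapping_sum_single: "p = (\<Sum>m\<in>Poly_Mapping.keys p. Poly_Mapping.single m (Poly_Mapping.lookup p m))"
proof (rule poly_mapping_eqI)
  fix k
  have "(\<Sum>m\<in>Poly_Mapping.keys p. Poly_Mapping.lookup (Poly_Mapping.single m (Poly_Mapping.lookup p m)) k)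
      = (\<Sum>m\<in>Poly_Mapping.keys p. if m = k then Poly_Mapping.lookup p m else 0)"
    by (intro sum.cong refl) (simp add: lookup_single when_def)
  also have "\<dots> = Poly_Mapping.lookup p k"
    by (simp add: in_keys_iff)
  finally show "Poly_Mapping.lookup p k
      = Poly_Mapping.lookup (\<Sum>m\<in>Poly_Mapping.keys p. Poly_Mapping.single m (Poly_Mapping.lookup p m)) k"
    by (simp add: lookup_sum)
qed

lemma single_in_max_ideal:
  assumes "m \<noteq> 0" "Poly_Mapping.keys m \<subseteq> {1..n}"
  shows "(Poly_Mapping.single m c :: 'a::comm_ring_1 mpoly) \<in> max_ideal n"
proof -
  obtain v where v: "v \<in> Poly_Mapping.keys m"
    using assms(1) by fastforce
  define m' where "m' = m - Poly_Mapping.single v 1"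
  have "m = m' + Poly_Mapping.single v 1"
    using v by (auto simp: poly_mapping_eq_iff fun_eq_iff m'_def lookup_add lookup_minus lookup_single
        when_def in_keys_iff)
  then have "Poly_Mapping.single m c = Poly_Mapping.single m' c * (var v :: 'a mpoly)"
    unfolding var_def by (simp add: mult_single)
  moreover have "Poly_Mapping.keys m' \<subseteq> Poly_Mapping.keys m"
    unfolding m'_def by (auto simp: in_keys_iff lookup_minus)
  then have "(Poly_Mapping.single m' c :: 'a mpoly) \<in> polyring n"
    using assms(2) unfolding polyring_def by auto
  ultimately show ?thesis
    using v assms(2) unfolding max_ideal_def by (auto intro: ideal_gen_scaled_generator)
qed

lemma max_ideal_eq: "max_ideal n = {p \<in> polyring n. Poly_Mapping.lookup p 0 = (0 :: 'a::comm_ring_1)}"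
proof (intro equalityI subsetI)
  fix p :: "'a mpoly"
  assume p: "p \<in> max_ideal n"
  then have "p \<in> polyring n"
    using ideal_gen_subset_polyring[of "var ` {1..n}" n] polyring_var unfolding max_ideal_def by blast
  moreover have "Poly_Mapping.lookup p 0 = 0"
  proof -
    obtain F r where "p = (\<Sum>g\<in>F. r g * g)" "F \<subseteq> var ` {1..n}"
      using p unfolding max_ideal_def ideal_gen_def by blast
    then show ?thesis
      by (auto simp: lookup_sum lookup_mult_0 lookup_var_0 intro!: sum.neutral)
  qed
  ultimately show "p \<in> {p \<in> polyring n. Poly_Mapping.lookup p 0 = 0}" by simp
next
  fix p :: "'a mpoly"
  assume p: "p \<in> {p \<in> polyring n. Poly_Mapping.lookup p 0 = 0}"
  have "p = (\<Sum>m\<in>Poly_Mapping.keys p. Poly_Mapping.single m (Poly_Mapping.lookup p m))"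
    by (rule poly_mapping_sum_single)
  also have "\<dots> \<in> max_ideal n"
  proof (rule ideal_gen_sum[of _ _ n "var ` {1..n}", folded max_ideal_def])
    fix m
    assume m: "m \<in> Poly_Mapping.keys p"
    then have "m \<noteq> 0"
      using p by (auto simp: in_keys_iff)
    moreover have "Poly_Mapping.keys m \<subseteq> {1..n}"
      using p m by (auto simp: polyring_def)
    ultimately show "Poly_Mapping.single m (Poly_Mapping.lookup p m) \<in> max_ideal n"
      by (rule single_in_max_ideal)
  qed
  finally show "p \<in> max_ideal n" .
qed

lemma prime_ideal_max_ideal: "prime_ideal n (max_ideal n :: 'a::idom mpoly set)"
  unfolding prime_ideal_def
proof (intro conjI ballI impI)
  show "ideal_gen n (max_ideal n) = (max_ideal n :: 'a mpoly set)"
    unfolding max_ideal_def by (rule ideal_gen_idem)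
  have "(1 :: 'a mpoly) \<notin> max_ideal n"
    by (simp add: max_ideal_eq)
  then show "max_ideal n \<noteq> (polyring n :: 'a mpoly set)"
    using polyring_1 by blast
  fix a b :: "'a mpoly"
  assume "a \<in> polyring n" "b \<in> polyring n" "a * b \<in> max_ideal n"
  then show "a \<in> max_ideal n \<or> b \<in> max_ideal n"
    by (auto simp: max_ideal_eq lookup_mult_0)
qed

lemma monomial_notin_ideal_gen:
  assumes "\<And>p. p \<in> J \<Longrightarrow> low_degree_ge e p" "monomial_of_degree d g" "d < e"
  shows "g \<notin> ideal_gen n J"
proof
  assume "g \<in> ideal_gen n J"
  with assms(1) have "low_degree_ge e g"
    by (rule low_degree_ge_ideal_gen)
  with assms(2,3) show False
    by (auto simp: monomial_of_degree_def low_degree_ge_def)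
qed

lemma colon_monomial_eq_max_ideal:
  fixes g :: "'a::comm_ring_1 mpoly"
  assumes "\<And>p. p \<in> J \<Longrightarrow> low_degree_ge e p" "monomial_of_degree d g" "d < e"
    and "\<And>f. f \<in> max_ideal n \<Longrightarrow> f * g \<in> J"
  shows "{f \<in> polyring n. f * g \<in> J} = max_ideal n"
proof
  show "max_ideal n \<subseteq> {f \<in> polyring n. f * g \<in> J}"
    using assms(4) by (auto simp: max_ideal_eq)
  show "{f \<in> polyring n. f * g \<in> J} \<subseteq> max_ideal n"
  proof clarify
    fix f
    assume f: "f \<in> polyring n" "f * g \<in> J"
    obtain m where m: "g = Poly_Mapping.single m 1" "total_degree m = d"
      using assms(2) by (auto simp: monomial_of_degree_def)
    have "Poly_Mapping.lookup (f * g) m = Poly_Mapping.lookup f 0"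
      using lookup_mult_single_add[of f m 1 0] m(1) by simp
    moreover have "m \<notin> Poly_Mapping.keys (f * g)"
      using assms(1)[OF f(2)] m(2) assms(3) by (auto simp: low_degree_ge_def)
    ultimately have "Poly_Mapping.lookup f 0 = 0"
      by (simp add: in_keys_iff)
    with f(1) show "f \<in> max_ideal n"
      by (simp add: max_ideal_eq)
  qed
qed

lemma depth_eq_0_if_annihilated_by_max_ideal:
  assumes "g \<in> polyring n" "g \<notin> ideal_gen n J" "\<And>f. f \<in> max_ideal n \<Longrightarrow> f * g \<in> J"
  shows "depth n J = 0"
proof -
  have "fs = []" if "regular_seq n J fs" for fs
  proof (rule ccontr)
    assume "fs \<noteq> []"
    then have f: "fs ! 0 \<in> max_ideal n" "nonzerodiv_mod n (ideal_gen n J) (fs ! 0)"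
      using that unfolding regular_seq_def by auto
    have "fs ! 0 * g \<in> ideal_gen n J"
      using assms(3)[OF f(1)] by (rule ideal_gen_generator)
    then have "g \<in> ideal_gen n J"
      using f(2) assms(1) unfolding nonzerodiv_mod_def by blast
    with assms(2) show False ..
  qed
  then have "depth n J \<le> 0"
    unfolding depth_def by (auto intro!: Sup_least simp: zero_enat_def)
  then show ?thesis by simp
qed

section \<open>The closed neighbourhood ideal of the cycle\<close>

text \<open>
  The vertex \<open>i\<close> of \<open>C\<^sub>n\<close> is addressed by every \<open>r\<close> with \<open>r mod n + 1 = i\<close>; in particular
  \<open>r + n - 1\<close> addresses the predecessor of \<open>r\<close> without truncated subtraction.
\<close>

definition cyc_var :: "nat \<Rightarrow> nat \<Rightarrow> 'a::comm_ring_1 mpoly" where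
  "cyc_var n r = var (r mod n + 1)"

definition nbhd_mono :: "nat \<Rightarrow> nat \<Rightarrow> 'a::comm_ring_1 mpoly" where
  "nbhd_mono n r = cyc_var n (r + n - 1) * cyc_var n r * cyc_var n (r + 1)"

lemma cyc_var_mod: "cyc_var n (r mod n) = cyc_var n r"
  by (simp add: cyc_var_def)

lemma cyc_var_add_self [simp]: "cyc_var n (r + n) = cyc_var n r"
  by (simp add: cyc_var_def)

lemma nbhd_mono_mod:
  assumes "0 < n"
  shows "nbhd_mono n (r mod n) = nbhd_mono n r"
proof -
  have "r mod n + n - 1 = r mod n + (n - 1)" "r + n - 1 = r + (n - 1)"
    using assms by auto
  then have "(r mod n + n - 1) mod n = (r + n - 1) mod n"
    by (simp only: mod_add_left_eq)
  then show ?thesis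
    unfolding nbhd_mono_def cyc_var_def by (simp add: mod_Suc_eq)
qed

lemma cycle_pred_succ_mod:
  fixes r n :: nat
  assumes "r < n"
  shows "(r + n - 1) mod n = (if r = 0 then n - 1 else r - 1)"
    and "(r + 1) mod n = (if r = n - 1 then 0 else r + 1)"
  using assms by (auto simp: mod_if)

lemma closed_nbhd_cycle:
  assumes "3 \<le> n" "r < n"
  shows "closed_nbhd n (r + 1) = {(r + n - 1) mod n + 1, r + 1, (r + 1) mod n + 1}"
  using assms cycle_pred_succ_mod[OF assms(2)]
  by (auto simp: closed_nbhd_def cycle_edge_def split: if_splits)

lemma prod_closed_nbhd_cycle:
  assumes "3 \<le> n" "r < n"
  shows "(\<Prod>j\<in>closed_nbhd n (r + 1). var j) = (nbhd_mono n r :: 'a::comm_ring_1 mpoly)"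
  using assms cycle_pred_succ_mod[OF assms(2)]
  unfolding closed_nbhd_cycle[OF assms] nbhd_mono_def cyc_var_def
  by (auto simp: mult_ac split: if_splits)

lemma NI_cycle_eq:
  assumes "3 \<le> n"
  shows "NI_cycle n = ideal_gen n (range (nbhd_mono n) :: 'a::comm_ring_1 mpoly set)"
proof -
  have "(\<lambda>i. \<Prod>j\<in>closed_nbhd n i. var j) ` {1..n} = (range (nbhd_mono n) :: 'a mpoly set)"
  proof (intro equalityI subsetI)
    fix p :: "'a mpoly"
    assume "p \<in> (\<lambda>i. \<Prod>j\<in>closed_nbhd n i. var j) ` {1..n}"
    then obtain i where i: "i \<in> {1..n}" "p = (\<Prod>j\<in>closed_nbhd n i. var j)"
      by blast
    then have "i - 1 < n" "i - 1 + 1 = i"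
      by auto
    with i(2) have "p = nbhd_mono n (i - 1)"
      using prod_closed_nbhd_cycle[OF assms, of "i - 1", where 'a = 'a] by simp
    then show "p \<in> range (nbhd_mono n)"
      by blast
  next
    fix p :: "'a mpoly"
    assume "p \<in> range (nbhd_mono n)"
    then obtain r where "p = nbhd_mono n r"
      by blast
    then have "p = nbhd_mono n (r mod n)"
      using assms by (simp add: nbhd_mono_mod)
    with assms have "p = (\<Prod>j\<in>closed_nbhd n (r mod n + 1). var j)"
      using prod_closed_nbhd_cycle[of n "r mod n", where 'a = 'a] by simp
    moreover have "r mod n + 1 \<in> {1..n}"
      using assms by (simp add: Suc_le_eq)
    ultimately show "p \<in> (\<lambda>i. \<Prod>j\<in>closed_nbhd n i. var j) ` {1..n}"
      by blast
  qed
  then show ?thesis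
    by (simp add: NI_cycle_def)
qed

lemma nbhd_mono_in_NI_cycle: "3 \<le> n \<Longrightarrow> nbhd_mono n r \<in> NI_cycle n"
  by (simp add: NI_cycle_eq ideal_gen_generator)

lemma polyring_cyc_var: "0 < n \<Longrightarrow> cyc_var n r \<in> polyring n"
  by (simp add: cyc_var_def polyring_var Suc_le_eq)

lemma polyring_nbhd_mono: "0 < n \<Longrightarrow> nbhd_mono n r \<in> polyring n"
  by (simp add: nbhd_mono_def polyring_mult polyring_cyc_var)

lemma monomial_of_degree_cyc_var: "monomial_of_degree 1 (cyc_var n r)"
  unfolding cyc_var_def by (rule monomial_of_degree_var)

lemma monomial_of_degree_nbhd_mono: "monomial_of_degree 3 (nbhd_mono n r)"
proof -
  have "monomial_of_degree (1 + 1 + 1) (nbhd_mono n r)"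
    unfolding nbhd_mono_def by (intro monomial_of_degree_mult monomial_of_degree_cyc_var)
  then show ?thesis by (simp add: numeral_3_eq_3)
qed

lemma low_degree_ge_ideal_pow_NI_cycle:
  assumes "3 \<le> n" "p \<in> ideal_pow n (NI_cycle n) k"
  shows "low_degree_ge (3 * k) p"
proof (rule low_degree_ge_ideal_pow[OF _ assms(2)])
  fix q
  assume "q \<in> NI_cycle n"
  then show "low_degree_ge 3 q"
    unfolding NI_cycle_eq[OF assms(1)]
    by (rule low_degree_ge_ideal_gen[rotated]) (auto intro: low_degree_ge_monomial monomial_of_degree_nbhd_mono)
qed

section \<open>The socle monomial\<close>

lemma bij_betw_affine_mod:
  assumes "coprime a n"
  shows "bij_betw (\<lambda>s. (c + a * s) mod n) {..<n} {..<n::nat}"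
proof -
  have "inj_on (\<lambda>s. (c + a * s) mod n) {..<n}"
  proof
    fix s s'
    assume s: "s \<in> {..<n}" "s' \<in> {..<n}" and "(c + a * s) mod n = (c + a * s') mod n"
    then have "[a * s = a * s'] (mod n)"
      by (simp add: cong_def[symmetric] cong_add_lcancel_nat)
    then have "[s = s'] (mod n)"
      using cong_mult_lcancel_nat[OF assms] by blast
    with s show "s = s'"
      by (simp add: cong_def)
  qed
  moreover have "(\<lambda>s. (c + a * s) mod n) ` {..<n} \<subseteq> {..<n}"
    by auto
  ultimately show ?thesis
    by (simp add: bij_betw_def endo_inj_surj)
qed

lemma prod_cyc_var_shift: "(\<Prod>r<n. cyc_var n (r + c)) = (\<Prod>r<n. cyc_var n r :: 'a::comm_ring_1 mpoly)"
proof -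
  have "(\<Prod>r<n. cyc_var n (r + c)) = (\<Prod>r<n. cyc_var n ((c + 1 * r) mod n) :: 'a mpoly)"
    by (simp add: cyc_var_mod add.commute)
  also have "\<dots> = (\<Prod>r<n. cyc_var n r)"
    by (rule prod.reindex_bij_betw[OF bij_betw_affine_mod]) simp
  finally show ?thesis .
qed

lemma prod_nbhd_mono: "(\<Prod>r<n. nbhd_mono n r) = (\<Prod>r<n. cyc_var n r :: 'a::comm_ring_1 mpoly) ^ 3"
proof -
  have "(\<Prod>r<n. nbhd_mono n r)
      = (\<Prod>r<n. cyc_var n (r + (n - 1))) * (\<Prod>r<n. cyc_var n r) * (\<Prod>r<n. cyc_var n (r + 1) :: 'a mpoly)"
    unfolding nbhd_mono_def prod.distrib by (intro arg_cong2[where f = "(*)"] prod.cong) auto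
  also have "\<dots> = (\<Prod>r<n. cyc_var n r) ^ 3"
    by (simp only: prod_cyc_var_shift power3_eq_cube)
  finally show ?thesis .
qed

lemma nbhd_mono_exchange:
  "nbhd_mono n (j + 1) * cyc_var n (j + 3) = nbhd_mono n (j + 2) * (cyc_var n j :: 'a::comm_ring_1 mpoly)"
proof -
  have "j + 1 + n - 1 = j + n" "j + 2 + n - 1 = (j + 1) + n" "j + 1 + 1 = j + 2" "j + 2 + 1 = j + 3"
    by simp_all
  then show ?thesis
    unfolding nbhd_mono_def by (simp only: cyc_var_add_self mult_ac)
qed

lemma cyc_var_slide:
  "cyc_var n (c + 3 * t) * (\<Prod>s<t. nbhd_mono n (c + 1 + 3 * s))
    = cyc_var n c * (\<Prod>s<t. nbhd_mono n (c + 2 + 3 * s) :: 'a::comm_ring_1 mpoly)"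
proof (induction t)
  case 0
  show ?case by simp
next
  case (Suc t)
  have idx: "c + 3 * Suc t = c + 3 * t + 3" "c + 1 + 3 * t = c + 3 * t + 1" "c + 2 + 3 * t = c + 3 * t + 2"
    by simp_all
  have "(cyc_var n (c + 3 * Suc t) * (\<Prod>s<Suc t. nbhd_mono n (c + 1 + 3 * s)) :: 'a mpoly)
      = (nbhd_mono n (c + 3 * t + 1) * cyc_var n (c + 3 * t + 3)) * (\<Prod>s<t. nbhd_mono n (c + 1 + 3 * s))"
    unfolding prod.lessThan_Suc idx by (simp only: mult_ac)
  also have "\<dots> = nbhd_mono n (c + 3 * t + 2) * (cyc_var n (c + 3 * t) * (\<Prod>s<t. nbhd_mono n (c + 1 + 3 * s)))"
    unfolding nbhd_mono_exchange by (simp only: mult_ac)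
  also have "\<dots> = nbhd_mono n (c + 3 * t + 2) * (cyc_var n c * (\<Prod>s<t. nbhd_mono n (c + 2 + 3 * s)))"
    by (simp only: Suc.IH)
  also have "\<dots> = cyc_var n c * (\<Prod>s<Suc t. nbhd_mono n (c + 2 + 3 * s) :: 'a mpoly)"
    unfolding prod.lessThan_Suc idx by (simp only: mult_ac)
  finally show ?case .
qed

text \<open>\<open>socle_mono n (n - 1)\<close> is the monomial \<open>g\<close>; the factor \<open>u\<^sub>0\<^sup>k\<^sup>+\<^sup>1\<^sup>-\<^sup>n\<close> lifts it to \<open>I\<^sup>k\<close>.\<close>

definition socle_mono :: "nat \<Rightarrow> nat \<Rightarrow> 'a::comm_ring_1 mpoly" where
  "socle_mono n k = (\<Prod>r<n. cyc_var n r ^ (if r < 4 then 2 else 3)) * nbhd_mono n 0 ^ (k + 1 - n)"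

lemma cyc_var_socle_mono_nbhd_mono:
  assumes "4 \<le> n"
  shows "cyc_var n 3 * socle_mono n (n - 1) * nbhd_mono n 1 = (\<Prod>r<n. nbhd_mono n r :: 'a::comm_ring_1 mpoly)"
proof -
  let ?X = "cyc_var n :: nat \<Rightarrow> 'a mpoly"
  have "(\<Prod>r<n. ?X r) ^ 3 = (\<Prod>r<n. ?X r ^ (if r < 4 then 2 else 3)) * (\<Prod>r<n. ?X r ^ (if r < 4 then 1 else 0))"
    unfolding prod_power_distrib prod.distrib[symmetric] by (intro prod.cong) (auto simp: power_add[symmetric])
  also have "(\<Prod>r<n. ?X r ^ (if r < 4 then 1 else 0)) = (\<Prod>r<4. ?X r ^ (if r < 4 then 1 else 0))"
    using assms by (intro prod.mono_neutral_right) auto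
  also have "\<dots> = ?X 0 * ?X 1 * ?X 2 * ?X 3"
    by (simp add: numeral_eq_Suc lessThan_Suc mult_ac)
  also have "?X 0 * ?X 1 * ?X 2 = nbhd_mono n 1"
  proof -
    have "1 + n - 1 = 0 + n" "1 + 1 = (2::nat)"
      by simp_all
    then show ?thesis
      unfolding nbhd_mono_def by (simp only: cyc_var_add_self)
  qed
  finally show ?thesis
    using assms by (simp add: prod_nbhd_mono socle_mono_def mult_ac)
qed

lemma prod_nbhd_mono_orbit:
  assumes "0 < n" "inj_on (\<lambda>s. (1 + 3 * s) mod n) {..<Suc t}"
  shows "(\<Prod>r\<in>(\<lambda>s. (1 + 3 * s) mod n) ` {..<Suc t}. nbhd_mono n r)
    = nbhd_mono n 1 * (\<Prod>s<t. nbhd_mono n (4 + 3 * s) :: 'a::comm_ring_1 mpoly)"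
proof -
  have "(\<Prod>r\<in>(\<lambda>s. (1 + 3 * s) mod n) ` {..<Suc t}. nbhd_mono n r)
      = (\<Prod>s<Suc t. nbhd_mono n ((1 + 3 * s) mod n) :: 'a mpoly)"
    unfolding prod.reindex[OF assms(2)] by (simp only: comp_def)
  also have "\<dots> = (\<Prod>s<Suc t. nbhd_mono n (1 + 3 * s))"
    using assms(1) by (simp only: nbhd_mono_mod)
  also have "\<dots> = nbhd_mono n 1 * (\<Prod>s<t. nbhd_mono n (4 + 3 * s))"
    unfolding prod.lessThan_Suc_shift by simp
  finally show ?thesis .
qed

lemma cyc_var_socle_mono_orbit:
  assumes "4 \<le> n"
  shows "cyc_var n (3 + 3 * t) * socle_mono n (n - 1) * (nbhd_mono n 1 * (\<Prod>s<t. nbhd_mono n (4 + 3 * s)))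
    = (\<Prod>r<n. nbhd_mono n r) * (\<Prod>s<t. nbhd_mono n (5 + 3 * s) :: 'a::comm_ring_1 mpoly)"
proof -
  let ?u = "nbhd_mono n :: nat \<Rightarrow> 'a mpoly"
  let ?g = "socle_mono n (n - 1) :: 'a mpoly"
  have "cyc_var n (3 + 3 * t) * ?g * (?u 1 * (\<Prod>s<t. ?u (4 + 3 * s)))
      = (cyc_var n (3 + 3 * t) * (\<Prod>s<t. ?u (3 + 1 + 3 * s))) * ?g * ?u 1"
    by (simp add: mult_ac)
  also have "\<dots> = (cyc_var n 3 * (\<Prod>s<t. ?u (3 + 2 + 3 * s))) * ?g * ?u 1"
    by (simp only: cyc_var_slide)
  also have "\<dots> = (cyc_var n 3 * ?g * ?u 1) * (\<Prod>s<t. ?u (5 + 3 * s))"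
    by (simp add: mult_ac)
  also have "\<dots> = (\<Prod>r<n. ?u r) * (\<Prod>s<t. ?u (5 + 3 * s))"
    unfolding cyc_var_socle_mono_nbhd_mono[OF assms] ..
  finally show ?thesis .
qed

lemma cyc_var_socle_mono_in_prods:
  assumes "4 \<le> n" "\<not> 3 dvd n"
  shows "cyc_var n r * socle_mono n (n - 1) \<in> prods (n - 1) (NI_cycle n :: 'a::idom mpoly set)"
proof -
  let ?u = "nbhd_mono n :: nat \<Rightarrow> 'a mpoly"
  let ?g = "socle_mono n (n - 1) :: 'a mpoly"
  have pos: "0 < n" and coprime: "coprime 3 n"
    using assms by (simp_all add: prime_imp_coprime)
  have "r mod n \<in> (\<lambda>s. (3 + 3 * s) mod n) ` {..<n}"
    using bij_betw_affine_mod[OF coprime, of 3] pos by (simp add: bij_betw_def)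
  then obtain t where t: "t < n" "(3 + 3 * t) mod n = r mod n"
    by auto
  then have Xr: "cyc_var n r = cyc_var n (3 + 3 * t)"
    by (metis cyc_var_mod)
  define D where "D = (\<lambda>s. (1 + 3 * s) mod n) ` {..<Suc t}"
  have inj: "inj_on (\<lambda>s. (1 + 3 * s) mod n) {..<Suc t}"
    using bij_betw_affine_mod[OF coprime, of 1] t(1) by (auto simp: bij_betw_def intro: inj_on_subset)
  have D_sub: "D \<subseteq> {..<n}"
    using assms(1) by (auto simp: D_def)
  have "cyc_var n r * ?g * prod ?u D = (\<Prod>r<n. ?u r) * (\<Prod>s<t. ?u (5 + 3 * s))"
    using assms(1) unfolding Xr D_def prod_nbhd_mono_orbit[OF pos inj] by (rule cyc_var_socle_mono_orbit)
  also have "\<dots> = (prod ?u ({..<n} - D) * (\<Prod>s<t. ?u (5 + 3 * s))) * prod ?u D"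
    unfolding prod.subset_diff[OF D_sub finite_lessThan] by (simp only: mult_ac)
  finally have "cyc_var n r * ?g * prod ?u D = (prod ?u ({..<n} - D) * (\<Prod>s<t. ?u (5 + 3 * s))) * prod ?u D" .
  moreover have "prod ?u D \<noteq> 0"
    using D_sub by (simp add: finite_subset monomial_of_degree_nonzero[OF monomial_of_degree_nbhd_mono])
  ultimately have "cyc_var n r * ?g = prod ?u ({..<n} - D) * (\<Prod>s<t. ?u (5 + 3 * s))"
    by simp
  moreover have "card ({..<n} - D) = n - Suc t"
    using card_Diff_subset[OF finite_subset[OF D_sub] D_sub] inj by (simp add: D_def card_image)
  then have "prod ?u ({..<n} - D) \<in> prods (n - Suc t) (NI_cycle n)"
    using prod_in_prods[of "{..<n} - D" ?u] assms(1) by (simp add: nbhd_mono_in_NI_cycle)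
  moreover have "(\<Prod>s<t. ?u (5 + 3 * s)) \<in> prods t (NI_cycle n)"
    using prod_in_prods[of "{..<t}" "\<lambda>s. ?u (5 + 3 * s)"] assms(1) by (simp add: nbhd_mono_in_NI_cycle)
  ultimately show ?thesis
    using prods_mult[of _ "n - Suc t" _ _ t] t(1) by fastforce
qed

lemma max_ideal_mult_socle_mono:
  assumes "4 \<le> n" "\<not> 3 dvd n" "n - 1 \<le> k" "f \<in> max_ideal n"
  shows "f * socle_mono n k \<in> ideal_pow n (NI_cycle n :: 'a::idom mpoly set) k"
proof -
  have "x * socle_mono n k \<in> ideal_gen n (prods k (NI_cycle n))" if x: "x \<in> var ` {1..n}" for x :: "'a mpoly"
  proof -
    obtain i where i: "i \<in> {1..n}" "x = var i"
      using x by blast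
    then have "(i - 1) mod n = i - 1"
      by (intro mod_less) auto
    with i have "x = cyc_var n (i - 1)"
      by (simp add: cyc_var_def)
    moreover have "socle_mono n k = socle_mono n (n - 1) * nbhd_mono n 0 ^ (k - (n - 1))"
      using assms(1,3) by (simp add: socle_mono_def)
    ultimately have "x * socle_mono n k = (cyc_var n (i - 1) * socle_mono n (n - 1)) * nbhd_mono n 0 ^ (k - (n - 1))"
      by (metis mult.assoc)
    also have "\<dots> \<in> prods (n - 1 + (k - (n - 1))) (NI_cycle n)"
      using assms(1) by (intro prods_mult cyc_var_socle_mono_in_prods[OF assms(1,2)] power_in_prods nbhd_mono_in_NI_cycle) simp
    finally have "x * socle_mono n k \<in> prods k (NI_cycle n)"
      using assms(3) by simp
    then show ?thesis
      by (rule ideal_gen_generator)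
  qed
  then show ?thesis
    using ideal_gen_mult_right assms(4) unfolding max_ideal_def ideal_pow_eq_ideal_gen_prods by blast
qed

lemma monomial_of_degree_socle_mono:
  assumes "4 \<le> n" "n - 1 \<le> k"
  shows "monomial_of_degree (3 * k - 1) (socle_mono n k)"
proof -
  have "(\<Sum>r<n. if r < 4 then 2 else 3 :: nat)
      = (\<Sum>r<4::nat. if r < 4 then 2 else 3) + (\<Sum>r\<in>{4..<n}. if r < 4 then 2 else 3)"
  proof -
    have split: "{..<n} = {..<4} \<union> {4..<n}"
      using assms(1) by auto
    show ?thesis
      unfolding split by (rule sum.union_disjoint) auto
  qed
  also have "\<dots> = 3 * n - 4"
    using assms(1) by (simp add: numeral_eq_Suc lessThan_Suc)
  finally have sum_exp: "(\<Sum>r<n. 1 * (if r < 4 then 2 else 3)) = 3 * n - 4"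
    by simp
  have "monomial_of_degree ((\<Sum>r<n. 1 * (if r < 4 then 2 else 3)) + 3 * (k + 1 - n)) (socle_mono n k)"
    unfolding socle_mono_def
    by (intro monomial_of_degree_mult monomial_of_degree_prod monomial_of_degree_power
        monomial_of_degree_cyc_var monomial_of_degree_nbhd_mono) simp
  then show ?thesis
    using assms unfolding sum_exp by (simp add: algebra_simps)
qed

lemma polyring_socle_mono: "0 < n \<Longrightarrow> socle_mono n k \<in> polyring n"
  by (simp add: socle_mono_def polyring_mult polyring_prod polyring_power polyring_cyc_var polyring_nbhd_mono)

lemma depth_ideal_pow_NI_cycle:
  assumes "4 \<le> n" "\<not> 3 dvd n" "n - 1 \<le> k"
  shows "depth n (ideal_pow n (NI_cycle n :: 'a::idom mpoly set) k) = 0"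
proof (rule depth_eq_0_if_annihilated_by_max_ideal)
  show "socle_mono n k \<in> polyring n"
    using assms(1) by (simp add: polyring_socle_mono)
  show "socle_mono n k \<notin> ideal_gen n (ideal_pow n (NI_cycle n :: 'a mpoly set) k)"
    using assms
    by (intro monomial_notin_ideal_gen[where d = "3 * k - 1" and e = "3 * k"] monomial_of_degree_socle_mono
        low_degree_ge_ideal_pow_NI_cycle) auto
  show "f * socle_mono n k \<in> ideal_pow n (NI_cycle n) k" if "f \<in> max_ideal n" for f :: "'a mpoly"
    using assms that by (rule max_ideal_mult_socle_mono)
qed

lemma max_ideal_in_Ass_ideal_pow_NI_cycle:
  assumes "4 \<le> n" "\<not> 3 dvd n" "n - 1 \<le> k"
  shows "max_ideal n \<in> Ass n (ideal_pow n (NI_cycle n :: 'a::idom mpoly set) k)"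
proof -
  have "{f \<in> polyring n. f * socle_mono n k \<in> ideal_pow n (NI_cycle n :: 'a mpoly set) k} = max_ideal n"
    using assms
    by (intro colon_monomial_eq_max_ideal[where d = "3 * k - 1" and e = "3 * k"] monomial_of_degree_socle_mono
        low_degree_ge_ideal_pow_NI_cycle
        max_ideal_mult_socle_mono) auto
  then show ?thesis
    using prime_ideal_max_ideal polyring_socle_mono[of n k] assms(1) unfolding Ass_def by force
qed

theorem corollary3p7:
  fixes n :: nat
  assumes "n \<ge> 4" and "n mod 3 \<noteq> 0"
  shows "depth n (ideal_pow n (NI_cycle n :: 'a::field mpoly set) (n - 1)) = 0
     \<and> max_ideal n \<in> Ass n (ideal_pow n (NI_cycle n :: 'a mpoly set) (n - 1))
     \<and> ((\<lambda>k. depth n (ideal_pow n (NI_cycle n :: 'a mpoly set) k)) \<longlongrightarrow> 0) sequentially"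
proof -
  have n: "4 \<le> n" "\<not> 3 dvd n"
    using assms by (auto simp: dvd_eq_mod_eq_0)
  have "\<forall>\<^sub>F k in sequentially. depth n (ideal_pow n (NI_cycle n :: 'a mpoly set) k) = 0"
    unfolding eventually_sequentially using depth_ideal_pow_NI_cycle[OF n] by blast
  then show ?thesis
    using depth_ideal_pow_NI_cycle[OF n order.refl] max_ideal_in_Ass_ideal_pow_NI_cycle[OF n order.refl]
    by (simp add: tendsto_eventually)
qed

end
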